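(* Let $k\geq2$, $n>2\ell'_k$ and $p\in\{0,1,2\}^{[\![1,n]\!]^2}$. Let $\tau'_k=(\ell'_k,\ell'_k)$. Then $J^A(p,\ell'_k)\cap J^B(p,\ell'_k)=\varnothing$ and $$\tau'_k+I(p,\ell'_k)\subseteq J^A(p,\ell'_k)\sqcup J^B(p,\ell'_k).$$
   Context: Alphabet $\widetilde{\mathcal{A}}=\{0,1,2\}$. Let $(N_k)_{k\geq1}$ be integers with $N_k\geq4$, $\ell_0=2$, $\ell_k=N_k\ell_{k-1}$; let $N'_k\geq2$ be integers dividing $N_k$ with $N_k/N'_k\geq2$, and $\ell'_k=N'_k\ell_{k-1}$. Words: $a_0=01$, $b_0=02$; for odd $k\geq1$, $a_k=(a_{k-1})^{N_k}$ and $b_k=b_{k-1}2^{(N_k-2)\ell_{k-1}}b_{k-1}$; for even $k\geq2$, $a_k=a_{k-1}1^{(N_k-2)\ell_{k-1}}a_{k-1}$ and $b_k=(b_{k-1})^{N_k}$. $\widetilde L_k=\{a_k,1^{\ell_k},b_k,2^{\ell_k}\}$. For odd $k$: $\widetilde A'_k=\{(a_{k-1})^{N'_k},1^{\ell'_k}\}$, $\widetilde B'_k=\{b_{k-1}2^{(N'_k-1)\ell_{k-1}},\,2^{(N'_k-1)\ell_{k-1}}b_{k-1},\,2^{\ell'_k}\}$; for even $k$: $\widetilde A'_k=\{a_{k-1}1^{(N'_k-1)\ell_{k-1}},\,1^{(N'_k-1)\ell_{k-1}}a_{k-1},\,1^{\ell'_k}\}$, $\widetilde B'_k=\{(b_{k-1})^{N'_k},2^{\ell'_k}\}$.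 For a dictionary $L$ of words of length $\ell$, $\langle L\rangle=\{x\in\widetilde{\mathcal{A}}^{\mathbb{Z}}:\exists u\in[\![1,\ell]\!],\forall v\in\mathbb{Z},(\sigma^{u+\ell v}x)|_{[\![1,\ell]\!]}\in L\}$. $\widetilde X=\bigcap_{k\geq0}\langle\widetilde L_k\rangle$ and $\widetilde{\widetilde X}=\{x\in\widetilde{\mathcal{A}}^{\mathbb{Z}^2}:\exists\widetilde x\in\widetilde X,\ x(i,j)=\widetilde x(i)\ \forall(i,j)\}$ is its vertically aligned version; $\mathcal{L}(\widetilde{\widetilde X},m)$ denotes its patterns on $[\![1,m]\!]^2$. $\widetilde{\widetilde A}'_k$ (resp. $\widetilde{\widetilde B}'_k$) is the set of patterns $q\in\widetilde{\mathcal{A}}^{[\![1,\ell'_k]\!]^2}$ with $q(i,j)=\widetilde q(i)$ for some $\widetilde q\in\widetilde A'_k$ (resp. $\widetilde B'_k$). For $u\in\mathbb{Z}^2$, $\sigma^u(p)(v)=p(u+v)$. Define $I(p,\ell'_k)=\{u\in[\![0,n-2\ell'_k]\!]^2:(\sigma^u p)|_{[\![1,2\ell'_k]\!]^2}\in\mathcal{L}(\widetilde{\widetilde X},2\ell'_k)\}$, $I^A(p,\ell'_k)=\{u\in[\![0,n-\ell'_k]\!]^2:(\sigma^up)|_{[\![1,\ell'_k]\!]^2}\in\widetilde{\widetilde A}'_k\}$, $J^A(p,\ell'_k)=\bigcup_{u\in I^A(p,\ell'_k)}(u+[\![1,\ell'_k]\!]^2)$, and $I^B,J^B$ analogously with $\widetilde{\widetilde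 B}'_k$. *)

theory Defs
  imports Main
begin

text \<open>Alphabet {0,1,2} encoded as natural numbers. N and N' are the parameter sequences
(N k for k \<ge> 1).\<close>

fun ell :: "(nat \<Rightarrow> nat) \<Rightarrow> nat \<Rightarrow> nat" where
  "ell N 0 = 2"
| "ell N (Suc k) = N (Suc k) * ell N k"

definition ell' :: "(nat \<Rightarrow> nat) \<Rightarrow> (nat \<Rightarrow> nat) \<Rightarrow> nat \<Rightarrow> nat" where
  "ell' N N' k = N' k * ell N (k - 1)"

fun aw :: "(nat \<Rightarrow> nat) \<Rightarrow> nat \<Rightarrow> nat list" where
  "aw N 0 = [0, 1]"
| "aw N (Suc k) = (if odd (Suc k) then concat (replicate (N (Suc k)) (aw N k))
      else aw N k @ replicate ((N (Suc k) - 2) * ell N k) 1 @ aw N k)"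

fun bw :: "(nat \<Rightarrow> nat) \<Rightarrow> nat \<Rightarrow> nat list" where
  "bw N 0 = [0, 2]"
| "bw N (Suc k) = (if odd (Suc k)
      then bw N k @ replicate ((N (Suc k) - 2) * ell N k) 2 @ bw N k
      else concat (replicate (N (Suc k)) (bw N k)))"

definition Ldict :: "(nat \<Rightarrow> nat) \<Rightarrow> nat \<Rightarrow> nat list set" where
  "Ldict N k = {aw N k, replicate (ell N k) 1, bw N k, replicate (ell N k) 2}"

definition A'dict :: "(nat \<Rightarrow> nat) \<Rightarrow> (nat \<Rightarrow> nat) \<Rightarrow> nat \<Rightarrow> nat list set" where
  "A'dict N N' k = (if odd k
     then {concat (replicate (N' k) (aw N (k - 1))), replicate (ell' N N' k) 1}
     else {aw N (k - 1) @ replicate ((N' k - 1) * ell N (k - 1)) 1,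
           replicate ((N' k - 1) * ell N (k - 1)) 1 @ aw N (k - 1),
           replicate (ell' N N' k) 1})"

definition B'dict :: "(nat \<Rightarrow> nat) \<Rightarrow> (nat \<Rightarrow> nat) \<Rightarrow> nat \<Rightarrow> nat list set" where
  "B'dict N N' k = (if odd k
     then {bw N (k - 1) @ replicate ((N' k - 1) * ell N (k - 1)) 2,
           replicate ((N' k - 1) * ell N (k - 1)) 2 @ bw N (k - 1),
           replicate (ell' N N' k) 2}
     else {concat (replicate (N' k) (bw N (k - 1))), replicate (ell' N N' k) 2})"

text \<open>The word (\<sigma>^s x)|[1,l], i.e. x(s+1) ... x(s+l).\<close>
definition word_at :: "(int \<Rightarrow> nat) \<Rightarrow> int \<Rightarrow> nat \<Rightarrow> nat list" where
  "word_at x s l = map (\<lambda>i. x (s + int i + 1)) [0..<l]"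

definition gen :: "nat list set \<Rightarrow> nat \<Rightarrow> (int \<Rightarrow> nat) set" where
  "gen L l = {x. (\<forall>i. x i \<le> 2) \<and>
     (\<exists>u\<in>{1..int l}. \<forall>v::int. word_at x (u + int l * v) l \<in> L)}"

definition Xt :: "(nat \<Rightarrow> nat) \<Rightarrow> (int \<Rightarrow> nat) set" where
  "Xt N = (\<Inter>k. gen (Ldict N k) (ell N k))"

definition XXt :: "(nat \<Rightarrow> nat) \<Rightarrow> (int \<times> int \<Rightarrow> nat) set" where
  "XXt N = {x. \<exists>xt\<in>Xt N. \<forall>i j. x (i, j) = xt i}"

definition box :: "nat \<Rightarrow> (int \<times> int) set" where
  "box m = {1..int m} \<times> {1..int m}"

definition vadd :: "int \<times> int \<Rightarrow> int \<times> int \<Rightarrow> int \<times> int" where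
  "vadd u v = (fst u + fst v, snd u + snd v)"

definition shift2 :: "int \<times> int \<Rightarrow> (int \<times> int \<Rightarrow> nat) \<Rightarrow> (int \<times> int \<Rightarrow> nat)" where
  "shift2 u p = (\<lambda>v. p (vadd u v))"

definition in_lang :: "(nat \<Rightarrow> nat) \<Rightarrow> nat \<Rightarrow> (int \<times> int \<Rightarrow> nat) \<Rightarrow> bool" where
  "in_lang N m q = (\<exists>x\<in>XXt N. \<exists>u. \<forall>v\<in>box m. q v = x (vadd u v))"

definition in_aligned :: "nat list set \<Rightarrow> nat \<Rightarrow> (int \<times> int \<Rightarrow> nat) \<Rightarrow> bool" where
  "in_aligned D l q = (\<exists>w\<in>D. \<forall>v\<in>box l. q v = w ! nat (fst v - 1))"

definition Iset :: "(nat \<Rightarrow> nat) \<Rightarrow> nat \<Rightarrow> (int \<times> int \<Rightarrow> nat) \<Rightarrow> nat \<Rightarrow> (int \<times> int) set" where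
  "Iset N n p l = {u \<in> {0..int n - 2 * int l} \<times> {0..int n - 2 * int l}.
      in_lang N (2 * l) (shift2 u p)}"

definition IAset :: "(nat \<Rightarrow> nat) \<Rightarrow> (nat \<Rightarrow> nat) \<Rightarrow> nat \<Rightarrow> nat \<Rightarrow> (int \<times> int \<Rightarrow> nat) \<Rightarrow> (int \<times> int) set" where
  "IAset N N' k n p = {u \<in> {0..int n - int (ell' N N' k)} \<times> {0..int n - int (ell' N N' k)}.
      in_aligned (A'dict N N' k) (ell' N N' k) (shift2 u p)}"

definition IBset :: "(nat \<Rightarrow> nat) \<Rightarrow> (nat \<Rightarrow> nat) \<Rightarrow> nat \<Rightarrow> nat \<Rightarrow> (int \<times> int \<Rightarrow> nat) \<Rightarrow> (int \<times> int) set" where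
  "IBset N N' k n p = {u \<in> {0..int n - int (ell' N N' k)} \<times> {0..int n - int (ell' N N' k)}.
      in_aligned (B'dict N N' k) (ell' N N' k) (shift2 u p)}"

definition JAset :: "(nat \<Rightarrow> nat) \<Rightarrow> (nat \<Rightarrow> nat) \<Rightarrow> nat \<Rightarrow> nat \<Rightarrow> (int \<times> int \<Rightarrow> nat) \<Rightarrow> (int \<times> int) set" where
  "JAset N N' k n p = (\<Union>u\<in>IAset N N' k n p. vadd u ` box (ell' N N' k))"

definition JBset :: "(nat \<Rightarrow> nat) \<Rightarrow> (nat \<Rightarrow> nat) \<Rightarrow> nat \<Rightarrow> nat \<Rightarrow> (int \<times> int \<Rightarrow> nat) \<Rightarrow> (int \<times> int) set" where
  "JBset N N' k n p = (\<Union>u\<in>IBset N N' k n p. vadd u ` box (ell' N N' k))"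

end

theory Submission
  imports Defs
begin

text \<open>Every word of \<open>A'dict\<close> consists of 1s and of 0s each immediately followed by a 1, and every
  word of \<open>B'dict\<close> likewise with 2. So an A-window and a B-window cannot share a column: if the
  A-window starts no later, its last column carries a 1 and lies inside the B-window, where only 0
  and 2 occur.
  For the covering, a legal pattern of width \<open>2 \<ell>'\<^sub>k\<close> is a vertically aligned piece of a point
  of \<open>Xt N\<close>. The level-\<open>k\<close> parsing of that point has blocks of length
  \<open>\<ell>\<^sub>k = (N\<^sub>k / N'\<^sub>k) \<ell>'\<^sub>k\<close>, and cutting each block into windows of length \<open>\<ell>'\<^sub>k\<close> yields
  words of \<open>A'dict \<union> B'dict\<close>. One of these windows starts within the first \<open>\<ell>'\<^sub>k\<close> columns of the
  pattern, and it contains the column of the point \<open>u + \<tau>'\<^sub>k\<close>.\<close>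

definition zero_prefixed :: "nat \<Rightarrow> nat list \<Rightarrow> bool" where
  "zero_prefixed c w \<longleftrightarrow>
     (\<forall>i<length w. w ! i = c \<or> (w ! i = 0 \<and> Suc i < length w \<and> w ! Suc i = c))"

lemma zero_prefixed_append:
  assumes "zero_prefixed c u" "zero_prefixed c v"
  shows "zero_prefixed c (u @ v)"
  unfolding zero_prefixed_def
proof (intro allI impI)
  fix i assume i: "i < length (u @ v)"
  show "(u @ v) ! i = c \<or> (u @ v) ! i = 0 \<and> Suc i < length (u @ v) \<and> (u @ v) ! Suc i = c"
  proof (cases "i < length u")
    case True
    then show ?thesis using assms(1) by (auto simp: zero_prefixed_def nth_append)
  next
    case False
    then have "i - length u < length v" using i by auto
    with False assms(2) show ?thesis by (auto simp: zero_prefixed_def nth_append Suc_diff_le)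
  qed
qed

lemma zero_prefixed_replicate: "zero_prefixed c (replicate n c)"
  by (simp add: zero_prefixed_def)

lemma zero_prefixed_concat_replicate:
  "zero_prefixed c u \<Longrightarrow> zero_prefixed c (concat (replicate n u))"
  by (induction n) (simp_all add: zero_prefixed_append, simp add: zero_prefixed_def)

lemma zero_prefixed_aw: "zero_prefixed 1 (aw N m)"
proof (induction m)
  case 0
  show ?case by (auto simp: zero_prefixed_def nth_Cons split: nat.splits)
next
  case (Suc m)
  then show ?case
    by (simp add: zero_prefixed_append zero_prefixed_concat_replicate zero_prefixed_replicate)
qed

lemma zero_prefixed_bw: "zero_prefixed 2 (bw N m)"
proof (induction m)
  case 0
  show ?case by (auto simp: zero_prefixed_def nth_Cons split: nat.splits)
next
  case (Suc m)
  then show ?case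
    by (simp add: zero_prefixed_append zero_prefixed_concat_replicate zero_prefixed_replicate)
qed

lemma zero_prefixed_A'dict: "w \<in> A'dict N N' k \<Longrightarrow> zero_prefixed 1 w"
  using zero_prefixed_aw[of N "k - 1"] zero_prefixed_replicate[of 1]
  by (auto simp: A'dict_def zero_prefixed_append zero_prefixed_concat_replicate split: if_splits)

lemma zero_prefixed_B'dict: "w \<in> B'dict N N' k \<Longrightarrow> zero_prefixed 2 w"
  using zero_prefixed_bw[of N "k - 1"] zero_prefixed_replicate[of 2]
  by (auto simp: B'dict_def zero_prefixed_append zero_prefixed_concat_replicate split: if_splits)

lemma zero_prefixed_nth: "zero_prefixed c w \<Longrightarrow> i < length w \<Longrightarrow> w ! i \<in> {c, 0}"
  by (auto simp: zero_prefixed_def)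

lemma zero_prefixed_last:
  assumes "zero_prefixed c w" "w \<noteq> []"
  shows "last w = c"
proof -
  have "length w - 1 < length w" "\<not> Suc (length w - 1) < length w" using assms(2) by auto
  then have "w ! (length w - 1) = c" using assms(1) unfolding zero_prefixed_def by blast
  then show ?thesis by (simp add: last_conv_nth assms(2))
qed

lemma length_word_at [simp]: "length (word_at x s l) = l"
  by (simp add: word_at_def)

lemma zero_prefixed_windows_disjoint:
  assumes "zero_prefixed c (word_at x f l)" "zero_prefixed d (word_at x f' l)"
    and "c \<noteq> 0" "c \<noteq> d" "f \<le> f'" "f' < f + int l"
  shows False
proof -
  have "l > 0" using assms(5,6) by linarith
  then have "x (f + int l) = c"
    using zero_prefixed_last[OF assms(1)] by (simp add: last_conv_nth word_at_def)
  moreover have "nat (f + int l - f' - 1) < l" using assms(5,6) by linarith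
  then have "x (f + int l) \<in> {d, 0}"
    using zero_prefixed_nth[OF assms(2)] assms(6) by (force simp: word_at_def)
  ultimately show False using assms(3,4) by auto
qed

lemma length_concat_replicate [simp]: "length (concat (replicate n u)) = n * length u"
  by (simp add: length_concat sum_list_replicate)

lemma ell_pos: "\<forall>j\<ge>1. N j > 0 \<Longrightarrow> 0 < ell N m"
  by (induction m) (simp_all del: One_nat_def)

lemma length_aw: "\<forall>j\<ge>1. N j \<ge> 2 \<Longrightarrow> length (aw N m) = ell N m"
proof (induction m)
  case (Suc m)
  then have "2 * ell N m + (N (Suc m) - 2) * ell N m = N (Suc m) * ell N m"
    by (simp add: diff_mult_distrib)
  with Suc show ?case by simp
qed simp

lemma length_bw: "\<forall>j\<ge>1. N j \<ge> 2 \<Longrightarrow> length (bw N m) = ell N m"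
proof (induction m)
  case (Suc m)
  then have "2 * ell N m + (N (Suc m) - 2) * ell N m = N (Suc m) * ell N m"
    by (simp add: diff_mult_distrib)
  with Suc show ?case by simp
qed simp

lemma length_A'dict_B'dict:
  assumes "\<forall>j\<ge>1. N j \<ge> 2" "N' k \<ge> 1" "w \<in> A'dict N N' k \<union> B'dict N N' k"
  shows "length w = ell' N N' k"
proof -
  have "ell N (k - 1) + (N' k - 1) * ell N (k - 1) = N' k * ell N (k - 1)"
    using assms(2) by (cases "N' k") auto
  then show ?thesis using assms length_aw[OF assms(1)] length_bw[OF assms(1)]
    by (auto simp: A'dict_def B'dict_def ell'_def split: if_splits)
qed

lemma take_drop_middle: "w = P @ W @ S \<Longrightarrow> take (length W) (drop (length P) w) = W"
  by simp

lemma take_drop_concat_replicate: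
  assumes "Np * Suc j \<le> Nk"
  shows "take (Np * length x) (drop (Np * length x * j) (concat (replicate Nk x)))
    = concat (replicate Np x)"
proof -
  have "Nk = Np * j + Np + (Nk - Np * Suc j)" using assms by simp
  then have "concat (replicate Nk x)
    = concat (replicate (Np * j) x) @ concat (replicate Np x) @ concat (replicate (Nk - Np * Suc j) x)"
    by (metis append.assoc concat_append replicate_add)
  from take_drop_middle[OF this] show ?thesis by (simp add: mult.commute mult.left_commute)
qed

lemma take_drop_replicate_window:
  assumes "Np * Suc j \<le> Nk"
  shows "take (Np * L) (drop (Np * L * j) (replicate (Nk * L) c)) = replicate (Np * L) c"
proof -
  have "Np * L * j + Np * L \<le> Nk * L"
    using mult_le_mono1[OF assms, of L] by (simp add: algebra_simps)
  then show ?thesis by simp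
qed

lemma take_drop_bracket_window:
  assumes "length x = L" "1 \<le> Np" "2 \<le> M" "j < M"
  shows "take (Np * L) (drop (Np * L * j) (x @ replicate ((M * Np - 2) * L) c @ x))
    \<in> {x @ replicate ((Np - 1) * L) c, replicate ((Np - 1) * L) c @ x, replicate (Np * L) c}"
    (is "take _ (drop _ ?w) \<in> _")
proof -
  have "2 * Np \<le> M * Np" using assms(3) by simp
  have length_pad: "length (x @ replicate ((Np - 1) * L) c) = Np * L" for c
    using assms(1,2) by (simp add: diff_mult_distrib)
  consider "j = 0" | "j = M - 1" | "0 < j" "j < M - 1" using assms(4) by linarith
  then show ?thesis
  proof cases
    case 1
    have "M * Np - 2 = (Np - 1) + (M * Np - Np - 1)" using \<open>2 * Np \<le> M * Np\<close> assms(2) by linarith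
    then have "?w = [] @ (x @ replicate ((Np - 1) * L) c) @ (replicate ((M * Np - Np - 1) * L) c @ x)"
      by (simp add: add_mult_distrib replicate_add)
    then show ?thesis using 1 length_pad by (metis take_drop_middle list.size(3) mult_0_right insertI1)
  next
    case 2
    have "M * Np - 2 = (M * Np - Np - 1) + (Np - 1)" using \<open>2 * Np \<le> M * Np\<close> assms(2) by linarith
    then have "?w = (x @ replicate ((M * Np - Np - 1) * L) c) @ (replicate ((Np - 1) * L) c @ x) @ []"
      by (simp add: add_mult_distrib replicate_add)
    moreover have "length (x @ replicate ((M * Np - Np - 1) * L) c) = Np * L * j"
    proof -
      have "Np * j = M * Np - Np" using 2 by (simp add: diff_mult_distrib2 mult.commute)
      then have "1 + (M * Np - Np - 1) = Np * j" using \<open>2 * Np \<le> M * Np\<close> assms(2) by linarith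
      then show ?thesis using assms(1) by (metis add_mult_distrib length_append length_replicate
          mult.commute mult.left_commute mult_1)
    qed
    moreover have "length (replicate ((Np - 1) * L) c @ x) = Np * L" using length_pad by simp
    ultimately show ?thesis by (metis take_drop_middle insertI1 insertI2)
  next
    case 3
    have "1 \<le> Np * j" using 3 assms(2) by simp
    have "Np * Suc j \<le> Np * (M - 1)" using 3 by (intro mult_le_mono2) simp
    then have "Np * j + Np \<le> M * Np - Np" by (simp add: diff_mult_distrib2 mult.commute)
    then have "M * Np - 2 = (Np * j - 1) + Np + (M * Np - Np * Suc j - 1)"
      using \<open>1 \<le> Np * j\<close> assms(2) by simp
    then have "?w = (x @ replicate ((Np * j - 1) * L) c) @ replicate (Np * L) c
        @ (replicate ((M * Np - Np * Suc j - 1) * L) c @ x)"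
      by (simp add: add_mult_distrib replicate_add)
    moreover have "length (x @ replicate ((Np * j - 1) * L) c) = Np * L * j"
      using \<open>1 \<le> Np * j\<close> assms(1) by (simp add: diff_mult_distrib algebra_simps)
    ultimately show ?thesis by (metis take_drop_middle length_replicate insertI1 insertI2)
  qed
qed

lemma Ldict_window_in_A'dict_B'dict:
  assumes "\<forall>j\<ge>1. N j \<ge> 2" "1 \<le> k" "N' k dvd N k" "2 \<le> N k div N' k"
    and "w \<in> Ldict N k" "j < N k div N' k"
  shows "take (ell' N N' k) (drop (ell' N N' k * j) w) \<in> A'dict N N' k \<union> B'dict N N' k"
proof -
  obtain m where k: "k = Suc m" using assms(2) by (cases k) auto
  define L where "L = ell N m"
  define Np where "Np = N' k"
  define M where "M = N k div N' k"
  have NkM: "N k = M * Np" using assms(3) by (simp add: M_def Np_def)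
  have "1 \<le> Np" using assms(4) by (cases "N' k") (auto simp: Np_def M_def)
  have l': "ell' N N' k = Np * L" by (simp add: ell'_def Np_def L_def k)
  have lk: "ell N k = M * Np * L" by (simp add: k L_def NkM[unfolded k])
  have la: "length (aw N m) = L" and lb: "length (bw N m) = L"
    using length_aw[OF assms(1)] length_bw[OF assms(1)] by (auto simp: L_def)
  have jM: "Np * Suc j \<le> M * Np"
    using mult_le_mono2[of "Suc j" M Np] assms(6) by (simp add: M_def mult.commute)
  have rep: "take (Np * L) (drop (Np * L * j) (replicate (ell N k) c)) = replicate (Np * L) c" for c
    using take_drop_replicate_window[OF jM] by (simp add: lk)
  note cat = take_drop_concat_replicate[OF jM]
  note bracket = take_drop_bracket_window[OF _ \<open>1 \<le> Np\<close> assms(4)[folded M_def] assms(6)[folded M_def]]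
  show ?thesis
  proof (cases "odd k")
    case True
    have "w \<in> {concat (replicate (M * Np) (aw N m)), replicate (ell N k) 1,
        bw N m @ replicate ((M * Np - 2) * L) 2 @ bw N m, replicate (ell N k) 2}"
      using assms(5) True NkM by (simp add: Ldict_def k L_def)
    then show ?thesis
      using True cat[of "aw N m"] bracket[OF lb, of 2] rep la
      by (auto simp: A'dict_def B'dict_def l' k Np_def L_def ell'_def)
  next
    case False
    have "w \<in> {aw N m @ replicate ((M * Np - 2) * L) 1 @ aw N m, replicate (ell N k) 1,
        concat (replicate (M * Np) (bw N m)), replicate (ell N k) 2}"
      using assms(5) False NkM by (simp add: Ldict_def k L_def)
    then show ?thesis
      using False cat[of "bw N m"] bracket[OF la, of 1] rep lb
      by (auto simp: A'dict_def B'dict_def l' k Np_def L_def ell'_def)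
  qed
qed

lemma word_at_add:
  "i + l \<le> m \<Longrightarrow> word_at x (s + int i) l = take l (drop i (word_at x s m))"
  by (intro nth_equalityI) (auto simp: word_at_def algebra_simps)

lemma Xt_window_in_A'dict_B'dict:
  assumes "\<forall>j\<ge>1. N j \<ge> 2" "1 \<le> k" "N' k dvd N k" "2 \<le> N k div N' k" "xt \<in> Xt N"
  obtains s where "0 \<le> s" "s < int (ell' N N' k)"
    "word_at xt (a + s) (ell' N N' k) \<in> A'dict N N' k \<union> B'dict N N' k"
proof -
  define l where "l = ell' N N' k"
  define M where "M = N k div N' k"
  obtain m where k: "k = Suc m" using assms(2) by (cases k) auto
  have "0 < N' k" using assms(4) by (cases "N' k") auto
  moreover have "0 < ell N m" using assms(1) by (intro ell_pos) auto
  ultimately have "0 < l" by (simp add: l_def ell'_def k)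
  have lk: "ell N k = M * l" using assms(3) by (simp add: l_def M_def ell'_def k)
  have "xt \<in> gen (Ldict N k) (ell N k)" using assms(5) by (simp add: Xt_def)
  then obtain c where c: "\<forall>v::int. word_at xt (c + int (ell N k) * v) (ell N k) \<in> Ldict N k"
    by (auto simp: gen_def)
  define s where "s = (c - a) mod int l"
  define q where "q = - ((c - a) div int l)"
  define v where "v = q div int M"
  define j where "j = nat (q mod int M)"
  have "0 \<le> s" "s < int l" using \<open>0 < l\<close> by (auto simp: s_def)
  have "0 < M" using assms(4) by (simp add: M_def)
  then have "j < M" by (simp add: j_def nat_less_iff)
  have "a + s = c + int l * q" by (simp add: s_def q_def mod_div_mult_eq[symmetric] algebra_simps)
  also have "q = int M * v + int j" using \<open>0 < M\<close> by (simp add: v_def j_def)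
  finally have "a + s = (c + int (ell N k) * v) + int (l * j)" by (simp add: lk algebra_simps)
  moreover have "l * j + l \<le> ell N k"
    using mult_le_mono2[of "Suc j" M l] \<open>j < M\<close> by (simp add: lk mult.commute)
  ultimately have "word_at xt (a + s) l
      = take l (drop (l * j) (word_at xt (c + int (ell N k) * v) (ell N k)))"
    by (metis word_at_add)
  then have "word_at xt (a + s) l \<in> A'dict N N' k \<union> B'dict N N' k"
    using Ldict_window_in_A'dict_B'dict[where N = N and N' = N' and k = k and j = j,
        OF assms(1-4) c[rule_format, of v]] \<open>j < M\<close>
    by (simp add: l_def M_def mult.commute)
  with \<open>0 \<le> s\<close> \<open>s < int l\<close> show ?thesis using that by (simp add: l_def)
qed

lemma word_at_row_of_aligned:
  assumes "\<forall>v\<in>box l. shift2 u p v = w ! nat (fst v - 1)" "length w = l"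
    and "snd u < r" "r \<le> snd u + int l"
  shows "word_at (\<lambda>i. p (i, r)) (fst u) l = w"
proof (rule nth_equalityI)
  fix i assume "i < length (word_at (\<lambda>i. p (i, r)) (fst u) l)"
  then have "(int i + 1, r - snd u) \<in> box l" using assms(3,4) by (auto simp: box_def)
  from assms(1)[rule_format, OF this] show "word_at (\<lambda>i. p (i, r)) (fst u) l ! i = w ! i"
    using \<open>i < _\<close> by (simp add: word_at_def shift2_def vadd_def add.assoc)
qed (simp add: assms(2))

lemma JAset_JBset_disjoint:
  assumes "\<forall>j\<ge>1. N j \<ge> 2" "N' k \<ge> 1"
  shows "JAset N N' k n p \<inter> JBset N N' k n p = {}"
proof (rule equals0I)
  define l where "l = ell' N N' k"
  fix z assume "z \<in> JAset N N' k n p \<inter> JBset N N' k n p"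
  then obtain u e wA u' e' wB where
    A: "wA \<in> A'dict N N' k" "\<forall>v\<in>box l. shift2 u p v = wA ! nat (fst v - 1)"
       "e \<in> box l" "z = vadd u e"
    and B: "wB \<in> B'dict N N' k" "\<forall>v\<in>box l. shift2 u' p v = wB ! nat (fst v - 1)"
       "e' \<in> box l" "z = vadd u' e'"
    unfolding JAset_def JBset_def IAset_def IBset_def in_aligned_def l_def by blast
  define x where "x i = p (i, snd z)" for i
  have "fst u < fst z" "fst z \<le> fst u + int l" "snd u < snd z" "snd z \<le> snd u + int l"
    and "fst u' < fst z" "fst z \<le> fst u' + int l" "snd u' < snd z" "snd z \<le> snd u' + int l"
    using A(3,4) B(3,4) by (auto simp: box_def vadd_def)
  moreover have "length wA = l" "length wB = l"
    using length_A'dict_B'dict[where N = N and N' = N' and k = k, OF assms] A(1) B(1)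
    by (auto simp: l_def)
  ultimately have "word_at x (fst u) l = wA" "word_at x (fst u') l = wB"
    using word_at_row_of_aligned A(2) B(2) unfolding x_def by blast+
  then have "zero_prefixed 1 (word_at x (fst u) l)" "zero_prefixed 2 (word_at x (fst u') l)"
    using zero_prefixed_A'dict[OF A(1)] zero_prefixed_B'dict[OF B(1)] by simp_all
  then show False
    using zero_prefixed_windows_disjoint[of 1 x "fst u" l 2 "fst u'"]
      zero_prefixed_windows_disjoint[of 2 x "fst u'" l 1 "fst u"]
      \<open>fst u < fst z\<close> \<open>fst u' < fst z\<close> \<open>fst z \<le> fst u + int l\<close> \<open>fst z \<le> fst u' + int l\<close>
    by linarith
qed

lemma Iset_translate_subset_JAset_JBset:
  assumes "\<forall>j\<ge>1. N j \<ge> 2" "1 \<le> k" "N' k dvd N k" "2 \<le> N k div N' k"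
  shows "vadd (int (ell' N N' k), int (ell' N N' k)) ` Iset N n p (ell' N N' k)
    \<subseteq> JAset N N' k n p \<union> JBset N N' k n p"
proof
  define l where "l = ell' N N' k"
  fix z assume "z \<in> vadd (int l, int l) ` Iset N n p l"
  then obtain u where "u \<in> Iset N n p l" and z: "z = vadd (int l, int l) u" by blast
  then obtain x u0 where u: "u \<in> {0..int n - 2 * int l} \<times> {0..int n - 2 * int l}"
    and "x \<in> XXt N" and x_u: "\<forall>v\<in>box (2 * l). shift2 u p v = x (vadd u0 v)"
    by (auto simp: Iset_def in_lang_def)
  then obtain xt where "xt \<in> Xt N" and x_xt: "\<forall>i j. x (i, j) = xt i" by (auto simp: XXt_def)
  obtain s where s: "0 \<le> s" "s < int l"
    and w: "word_at xt (fst u0 + s) l \<in> A'dict N N' k \<union> B'dict N N' k"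
    using Xt_window_in_A'dict_B'dict[where N = N and N' = N' and k = k and a = "fst u0",
        OF assms \<open>xt \<in> Xt N\<close>] unfolding l_def by blast
  define u' where "u' = vadd u (s, 0)"
  have "u' \<in> {0..int n - int l} \<times> {0..int n - int l}" using u s by (auto simp: u'_def vadd_def)
  moreover have "\<forall>v\<in>box l. shift2 u' p v = word_at xt (fst u0 + s) l ! nat (fst v - 1)"
  proof
    fix v assume "v \<in> box l"
    then have "(s + fst v, snd v) \<in> box (2 * l)" using s by (auto simp: box_def)
    from x_u[rule_format, OF this] \<open>v \<in> box l\<close>
    show "shift2 u' p v = word_at xt (fst u0 + s) l ! nat (fst v - 1)"
      by (auto simp: shift2_def u'_def vadd_def x_xt word_at_def box_def algebra_simps)
  qed
  ultimately have "u' \<in> IAset N N' k n p \<union> IBset N N' k n p"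
    using w by (auto simp: IAset_def IBset_def in_aligned_def l_def)
  moreover have "z = vadd u' (int l - s, int l)" "(int l - s, int l) \<in> box l"
    using z s by (auto simp: u'_def vadd_def box_def)
  ultimately show "z \<in> JAset N N' k n p \<union> JBset N N' k n p"
    unfolding JAset_def JBset_def l_def by blast
qed

theorem lemma3p5:
  fixes N N' :: "nat \<Rightarrow> nat" and k n :: nat and p :: "int \<times> int \<Rightarrow> nat"
  assumes hN: "\<forall>j\<ge>1. N j \<ge> 4"
    and hN': "\<forall>j\<ge>1. N' j \<ge> 2 \<and> N' j dvd N j \<and> N j div N' j \<ge> 2"
    and hk: "k \<ge> 2"
    and hn: "n > 2 * ell' N N' k"
    and hp: "\<forall>v\<in>box n. p v \<in> {0, 1, 2}"
  shows "JAset N N' k n p \<inter> JBset N N' k n p = {}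
    \<and> vadd (int (ell' N N' k), int (ell' N N' k)) ` Iset N n p (ell' N N' k)
        \<subseteq> JAset N N' k n p \<union> JBset N N' k n p"
proof -
  \<comment> \<open>\<open>hn\<close> and \<open>hp\<close> are not needed: the index ranges built into \<open>Iset\<close>, \<open>IAset\<close>, \<open>IBset\<close> suffice.\<close>
  have N: "\<forall>j\<ge>1. N j \<ge> 2" using hN by (simp add: order_trans[of 2 4])
  have "2 \<le> N' k" "N' k dvd N k" "2 \<le> N k div N' k" using hN' hk by simp_all
  moreover have "1 \<le> k" "N' k \<ge> 1" using hk \<open>2 \<le> N' k\<close> by simp_all
  ultimately show ?thesis
    using JAset_JBset_disjoint[where N = N and N' = N' and k = k]
      Iset_translate_subset_JAset_JBset[where N = N and N' = N' and k = k] N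
    by simp
qed

end
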